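(* Assume (A1) and (A2). Let $t_0\le t_1$ and $B>0$ be such that: (1) the sets $\mathcal{U}^{(t)}_{\pm y,\pm}$ and $\mathcal{V}^{(t)}_{\pm y,\pm}$ do not depend on $t\in[t_0,t_1]$; (2) $\max_{r}\langle\mathbf{w}^{(t)}_{y,r},y\mathbf{u}\rangle<B(\beta^*_{\mathbf{u}}m)^{1/2}$ for all $t\in[t_0,t_1]$; (3) $\min_r\langle\mathbf{w}^{(t)}_{-y,r},-y\mathbf{u}\rangle>-0.1$ and $\min_r\langle\mathbf{w}^{(t)}_{-y,r},-y\mathbf{v}\rangle>-0.1$ for all $t\in[t_0,t_1]$; (4) $\frac1m\sum_r\sigma(\langle\mathbf{w}^{(t)}_{y,r},y\mathbf{v}\rangle)<\delta$ for all $t\in[t_0,t_1]$; (5) $-2\le1-yf(\mathbf{x};\mathbf{W}^{(t)})\le1$ for all $t\in[t_0,t_1]$. Then, with $\epsilon=(\delta-\delta(1.05-\delta)^{1/2})/4$, $$\sum_{s=t_0}^{t_1-1}\big(1-yf(\mathbf{x};\mathbf{W}^{(s)})\big)\ge2\epsilon(t_1-t_0)-\frac{mB}{\eta\|\mathbf{u}\|_2^2\sqrt{1.05-\delta}},$$ and for every $r$ with $\langle\mathbf{w}^{(t_0)}_{y,r},y\mathbf{v}\rangle>0$, $$\langle\mathbf{w}^{(t_1)}_{y,r},y\mathbf{v}\rangle\ge\langle\mathbf{w}^{(t_0)}_{y,r},y\mathbf{v}\rangle\exp\Big\{\frac{\eta\|\mathbf{v}\|_2^2\epsilon}{m}(t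_1-t_0)-\frac{\|\mathbf{v}\|_2^2}{\|\mathbf{u}\|_2^2}\cdot\frac{B}{(1.05-\delta)^{1/2}}\Big\}.$$
   Context: Single-data setting: $\mathbf{u},\mathbf{v}\in\mathbb{R}^d$ are fixed nonzero vectors with $\langle\mathbf{u},\mathbf{v}\rangle=0$, $y\in\{\pm1\}$, and the single training example is $(\mathbf{x},y)$ with $\mathbf{x}=(y\mathbf{u},y\mathbf{v})$. Let $\sigma(z)=(\max\{z,0\})^2$ (so $\sigma'(z)=2\max\{z,0\}$). Weights $\mathbf{W}=\{\mathbf{w}_{j,r}\}_{j\in\{\pm1\},r\in[m]}\subset\mathbb{R}^d$; network $f(\mathbf{x};\mathbf{W})=\sum_{j\in\{\pm1\}}jF_j(\mathbf{x};\mathbf{W})$ with $F_j(\mathbf{x};\mathbf{W})=\frac1m\sum_{r\in[m]}[\sigma(\langle\mathbf{w}_{j,r},y\mathbf{u}\rangle)+\sigma(\langle\mathbf{w}_{j,r},y\mathbf{v}\rangle)]$; loss $L(\mathbf{W})=\frac12(f(\mathbf{x};\mathbf{W})-y)^2$. All entries of all $\mathbf{w}^{(0)}_{j,r}$ are i.i.d. $N(0,\sigma_0^2)$, and for $t\ge0$: $\mathbf{w}^{(t+1)}_{j,r}=\mathbf{w}^{(t)}_{j,r}-\frac{\eta j}{m}(f(\mathbf{x};\mathbf{W}^{(t)})-y)\big(\sigma'(\langle\mathbf{w}^{(t)}_{j,r},y\mathbf{u}\rangle)y\mathbf{u}+\sigma'(\langle\mathbf{w}^{(t)}_{j,r},y\mathbf{v}\rangle)y\mathbf{v}\big)$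 with learning rate $\eta>0$. (A1) Conditions: $m/(4\|\mathbf{u}\|_2^2)\le\eta\le2m/(5\|\mathbf{u}\|_2^2)$; $\sigma_0=\tilde\Theta(\max\{\|\mathbf{u}\|_2,\|\mathbf{v}\|_2\}^{-1}d^{-1/2})$; $\|\mathbf{v}\|_2<0.01\|\mathbf{u}\|_2$; $d=\Omega(\mathrm{polylog}(m))$. (A2) Oscillation: there is a constant $\delta\in(0.2,0.8)$ with $|yf(\mathbf{x};\mathbf{W}^{(t)})-1|\ge\delta$ for every $t\ge0$. Neuron sets: for $j\in\{\pm1\}$, $\mathcal{U}^{(t)}_{j,+}=\{r\in[m]:\langle\mathbf{w}^{(t)}_{j,r},j\mathbf{u}\rangle>0\}$, $\mathcal{U}^{(t)}_{j,-}=[m]\setminus\mathcal{U}^{(t)}_{j,+}$; $\mathcal{V}^{(t)}_{j,\pm}$ likewise with $\mathbf{v}$. Here $\beta^*_{\mathbf{u}}=\max_{r}\sigma(\langle\mathbf{w}^{(t_0)}_{y,r},y\mathbf{u}\rangle)/\sum_{r}\sigma(\langle\mathbf{w}^{(t_0)}_{y,r},y\mathbf{u}\rangle)$ (assumed well defined). *)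

theory Defs
  imports "HOL-Analysis.Analysis"
begin

definition act :: "real \<Rightarrow> real" where
  "act z = (max z 0)\<^sup>2"

definition act' :: "real \<Rightarrow> real" where
  "act' z = 2 * max z 0"

(* Weights: W j r for j \<in> {1,-1} (encoded as a real) and neuron index r \<in> {0..<m}
   (the paper's [m], re-indexed from 0). *)
type_synonym 'd weights = "real \<Rightarrow> nat \<Rightarrow> real ^ 'd"

(* F_j(x;W) for the input x = (p, q) with p = y u, q = y v. *)
definition netF :: "nat \<Rightarrow> 'd weights \<Rightarrow> real \<Rightarrow> real^'d \<Rightarrow> real^'d \<Rightarrow> real" where
  "netF m W j p q = (1 / real m) * (\<Sum>r<m. act (W j r \<bullet> p) + act (W j r \<bullet> q))"

definition netf :: "nat \<Rightarrow> 'd weights \<Rightarrow> real^'d \<Rightarrow> real^'d \<Rightarrow> real" where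
  "netf m W p q = netF m W 1 p q - netF m W (-1) p q"

(* One gradient-descent step on L(W) = (f(x;W) - y)^2 / 2 with x = (y u, y v). *)
definition gd_step :: "nat \<Rightarrow> real \<Rightarrow> real \<Rightarrow> real^'d \<Rightarrow> real^'d \<Rightarrow> 'd weights \<Rightarrow> 'd weights" where
  "gd_step m \<eta> y u v W = (\<lambda>j r. W j r - ((\<eta> * j / real m) * (netf m W (y *\<^sub>R u) (y *\<^sub>R v) - y)) *\<^sub>R
        (act' (W j r \<bullet> (y *\<^sub>R u)) *\<^sub>R (y *\<^sub>R u) + act' (W j r \<bullet> (y *\<^sub>R v)) *\<^sub>R (y *\<^sub>R v)))"

definition traj :: "nat \<Rightarrow> real \<Rightarrow> real \<Rightarrow> real^'d \<Rightarrow> real^'d \<Rightarrow> 'd weights \<Rightarrow> nat \<Rightarrow> 'd weights" where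
  "traj m \<eta> y u v W0 t = ((gd_step m \<eta> y u v) ^^ t) W0"

(* Neuron set {r \<in> [m] : <w_{j,r}, j a> > 0}; with a = u gives U_{j,+}, with a = v gives V_{j,+}.
   The "-" sets are the complements in [m]. *)
definition posset :: "nat \<Rightarrow> 'd weights \<Rightarrow> real \<Rightarrow> real^'d \<Rightarrow> nat set" where
  "posset m W j a = {r. r < m \<and> W j r \<bullet> (j *\<^sub>R a) > 0}"

definition negset :: "nat \<Rightarrow> 'd weights \<Rightarrow> real \<Rightarrow> real^'d \<Rightarrow> nat set" where
  "negset m W j a = {..<m} - posset m W j a"

definition beta_star :: "nat \<Rightarrow> 'd weights \<Rightarrow> real \<Rightarrow> real^'d \<Rightarrow> real" where
  "beta_star m W y u = Max ((\<lambda>r. act (W y r \<bullet> (y *\<^sub>R u))) ` {..<m}) /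
                        (\<Sum>r<m. act (W y r \<bullet> (y *\<^sub>R u)))"

end

theory Submission
  imports Defs
begin

text \<open>
  On the phase, every neuron of \<open>F\<^sub>y\<close> that is active on \<open>y u\<close> is multiplied by the same factor
  \<open>1 + \<kappa> \<ell>\<close> at each step, where \<open>\<ell> = 1 - y f\<close> and \<open>\<kappa> = 2 \<eta> \<parallel>u\<parallel>\<^sup>2 / m\<close>; hence the square root
  \<open>g\<close> of the \<open>u\<close>-part of \<open>F\<^sub>y\<close> satisfies \<open>g' = (1 + \<kappa> \<ell>) g\<close>. Because the remaining parts of
  \<open>y f\<close> are controlled, oscillation leaves two regimes: \<open>\<ell> \<ge> \<delta>\<close> with \<open>g \<le> c = sqrt (1.05 - \<delta>)\<close>, or
  \<open>\<ell> \<le> -\<delta>\<close> with \<open>g \<ge> 1\<close>. In both, \<open>\<kappa> \<ell> - a (g' - g) = \<kappa> \<ell> (1 - a g) \<ge> \<kappa> \<delta> (1 - c) / 2\<close> for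
  \<open>a = (3 - c) / 2\<close>, so summing over the phase telescopes the \<open>g\<close>-terms, and \<open>g(t\<^sub>0) < B\<close> yields the
  lower bound on \<open>\<Sum> \<ell>\<close>. A positive \<open>v\<close>-neuron of \<open>F\<^sub>y\<close> is multiplied by \<open>1 + \<kappa>\<^sub>v \<ell>\<close> with \<open>\<kappa>\<^sub>v\<close> tiny,
  and \<open>ln (1 + x) \<ge> x - 2 x\<^sup>2\<close> turns the same bound into exponential growth.
\<close>

lemma act_nonneg: "0 \<le> act z"
  by (simp add: act_def)

lemma act_eq_0_iff: "act z = 0 \<longleftrightarrow> z \<le> 0"
  by (simp add: act_def max_def)

lemma act_of_nonneg: "0 \<le> z \<Longrightarrow> act z = z\<^sup>2"
  by (simp add: act_def)

lemma mono_act: "mono act"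
  unfolding act_def mono_def by (auto intro!: power_mono)

lemma act_less_square:
  assumes "0 < c" "z < c"
  shows "act z < c\<^sup>2"
proof (cases "0 < z")
  case True
  then show ?thesis using assms act_of_nonneg by (simp add: power_strict_mono)
next
  case False
  then show ?thesis using assms act_eq_0_iff[of z] by simp
qed

lemma act_relu_update:
  assumes "0 \<le> 1 + k"
  shows "act (z + k * max z 0) = (1 + k)\<^sup>2 * act z"
proof (cases "0 < z")
  case True
  then have "z + k * max z 0 = (1 + k) * z"
    by (simp add: algebra_simps)
  then show ?thesis
    using True assms act_of_nonneg by (simp add: power_mult_distrib)
next
  case False
  then show ?thesis by (simp add: act_def max_def)
qed

definition mean_act :: "nat \<Rightarrow> 'd weights \<Rightarrow> real \<Rightarrow> real^'d \<Rightarrow> real" where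
  "mean_act m W j a = (1 / real m) * (\<Sum>r<m. act (W j r \<bullet> a))"

lemma mean_act_nonneg: "0 \<le> mean_act m W j a"
  unfolding mean_act_def by (simp add: sum_nonneg act_nonneg)

lemma netF_eq_mean_act: "netF m W j p q = mean_act m W j p + mean_act m W j q"
  unfolding netF_def mean_act_def by (simp add: sum.distrib algebra_simps)

lemma netF_nonneg: "0 \<le> netF m W j p q"
  by (simp add: netF_eq_mean_act mean_act_nonneg)

lemma netF_le_of_inner_less:
  assumes "0 < c" and "\<And>r. r < m \<Longrightarrow> W j r \<bullet> p < c \<and> W j r \<bullet> q < c"
  shows "netF m W j p q \<le> 2 * c\<^sup>2"
proof -
  have "(\<Sum>r<m. act (W j r \<bullet> p) + act (W j r \<bullet> q)) \<le> (\<Sum>r<m. 2 * c\<^sup>2)"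
  proof (rule sum_mono)
    fix r assume "r \<in> {..<m}"
    then have "act (W j r \<bullet> p) < c\<^sup>2" "act (W j r \<bullet> q) < c\<^sup>2"
      using assms act_less_square by auto
    then show "act (W j r \<bullet> p) + act (W j r \<bullet> q) \<le> 2 * c\<^sup>2"
      by simp
  qed
  then show ?thesis
    unfolding netF_def by (cases "m = 0") (simp_all add: field_simps)
qed

lemma y_netf_eq:
  assumes "y = 1 \<or> y = -1"
  shows "y * netf m W p q = netF m W y p q - netF m W (-y) p q"
  using assms unfolding netf_def by auto

lemma inner_gd_step:
  "gd_step m \<eta> y u v W j r \<bullet> z = W j r \<bullet> z - ((\<eta> * j / real m) * (netf m W (y *\<^sub>R u) (y *\<^sub>R v) - y)) *
     (act' (W j r \<bullet> (y *\<^sub>R u)) * ((y *\<^sub>R u) \<bullet> z) + act' (W j r \<bullet> (y *\<^sub>R v)) * ((y *\<^sub>R v) \<bullet> z))"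
  unfolding gd_step_def by (simp add: inner_diff_left inner_add_left)

lemma gd_step_inner_u:
  assumes "y = 1 \<or> y = -1" and "u \<bullet> v = 0"
  shows "gd_step m \<eta> y u v W y r \<bullet> (y *\<^sub>R u) = W y r \<bullet> (y *\<^sub>R u)
     + (2 * \<eta> * (norm u)\<^sup>2 / real m) * (1 - y * netf m W (y *\<^sub>R u) (y *\<^sub>R v)) * max (W y r \<bullet> (y *\<^sub>R u)) 0"
  using assms unfolding inner_gd_step act'_def
  by (auto simp: power2_norm_eq_inner inner_commute algebra_simps)

lemma gd_step_inner_v:
  assumes "y = 1 \<or> y = -1" and "u \<bullet> v = 0"
  shows "gd_step m \<eta> y u v W y r \<bullet> (y *\<^sub>R v) = W y r \<bullet> (y *\<^sub>R v)
     + (2 * \<eta> * (norm v)\<^sup>2 / real m) * (1 - y * netf m W (y *\<^sub>R u) (y *\<^sub>R v)) * max (W y r \<bullet> (y *\<^sub>R v)) 0"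
  using assms unfolding inner_gd_step act'_def
  by (auto simp: power2_norm_eq_inner inner_commute algebra_simps)

lemma oscillation_step_gain:
  fixes \<kappa> \<delta> c l g :: real
  assumes "0 \<le> \<kappa>" "0 \<le> \<delta>" "c \<le> 1"
    and "\<delta> \<le> l \<and> g \<le> c \<or> l \<le> -\<delta> \<and> 1 \<le> g"
  shows "\<kappa> * \<delta> * (1 - c) / 2 \<le> \<kappa> * l * (1 - (3 - c) / 2 * g)"
proof -
  have base: "0 \<le> \<kappa> * \<delta>" "0 \<le> (1 - c) / 2"
    using assms(1-3) by simp_all
  from assms(4) show ?thesis
  proof
    assume case_pos: "\<delta> \<le> l \<and> g \<le> c"
    then have "(3 - c) / 2 * g \<le> (3 - c) / 2 * c"
      using assms(3) by (intro mult_left_mono) auto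
    moreover have "(1 - c) / 2 \<le> 1 - (3 - c) / 2 * c"
      using zero_le_power2[of "1 - c"] by (simp add: power2_eq_square field_simps)
    ultimately have factor: "(1 - c) / 2 \<le> 1 - (3 - c) / 2 * g"
      by linarith
    have scaled: "\<kappa> * \<delta> \<le> \<kappa> * l"
      using assms(1) case_pos by (intro mult_left_mono) auto
    from scaled factor have "\<kappa> * \<delta> * ((1 - c) / 2) \<le> \<kappa> * l * (1 - (3 - c) / 2 * g)"
      by (rule mult_mono) (use base scaled in linarith)+
    then show ?thesis by simp
  next
    assume case_neg: "l \<le> -\<delta> \<and> 1 \<le> g"
    then have "(3 - c) / 2 * 1 \<le> (3 - c) / 2 * g"
      using assms(3) by (intro mult_left_mono) auto
    then have factor: "(1 - c) / 2 \<le> (3 - c) / 2 * g - 1"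
      by (simp add: field_simps)
    have scaled: "\<kappa> * \<delta> \<le> \<kappa> * - l"
      using assms(1) case_neg by (intro mult_left_mono) auto
    from scaled factor have "\<kappa> * \<delta> * ((1 - c) / 2) \<le> \<kappa> * - l * ((3 - c) / 2 * g - 1)"
      by (rule mult_mono) (use base scaled in linarith)+
    also have "\<kappa> * - l * ((3 - c) / 2 * g - 1) = \<kappa> * l * (1 - (3 - c) / 2 * g)"
      by (simp add: field_simps)
    finally show ?thesis by simp
  qed
qed

lemma oscillation_sum_gain:
  fixes l g :: "nat \<Rightarrow> real"
  assumes "0 \<le> \<kappa>" "0 \<le> \<delta>" "c \<le> 1" "t0 \<le> t1"
    and growth: "\<And>s. s \<in> {t0..<t1} \<Longrightarrow> g (Suc s) = (1 + \<kappa> * l s) * g s"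
    and regime: "\<And>s. s \<in> {t0..<t1} \<Longrightarrow> \<delta> \<le> l s \<and> g s \<le> c \<or> l s \<le> -\<delta> \<and> 1 \<le> g s"
  shows "\<kappa> * \<delta> * (1 - c) / 2 * real (t1 - t0) + (3 - c) / 2 * (g t1 - g t0)
           \<le> \<kappa> * (\<Sum>s\<in>{t0..<t1}. l s)"
proof -
  have "\<kappa> * \<delta> * (1 - c) / 2 \<le> \<kappa> * l s - (3 - c) / 2 * (g (Suc s) - g s)" if "s \<in> {t0..<t1}" for s
    using oscillation_step_gain[OF assms(1-3) regime[OF that]] growth[OF that]
    by (simp add: algebra_simps)
  then have "(\<Sum>s\<in>{t0..<t1}. \<kappa> * \<delta> * (1 - c) / 2)
      \<le> (\<Sum>s\<in>{t0..<t1}. \<kappa> * l s - (3 - c) / 2 * (g (Suc s) - g s))"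
    by (rule sum_mono)
  also have "\<dots> = (\<Sum>s\<in>{t0..<t1}. \<kappa> * l s) - (\<Sum>s\<in>{t0..<t1}. (3 - c) / 2 * (g (Suc s) - g s))"
    by (rule sum_subtractf)
  also have "\<dots> = \<kappa> * (\<Sum>s\<in>{t0..<t1}. l s) - (3 - c) / 2 * (g t1 - g t0)"
    by (simp only: sum_distrib_left[symmetric] sum_Suc_diff'[OF assms(4)])
  finally show ?thesis by (simp add: field_simps)
qed

lemma prod_of_mult_recurrence:
  fixes b f :: "nat \<Rightarrow> 'a::comm_monoid_mult"
  assumes "t0 \<le> t1" and "\<And>s. s \<in> {t0..<t1} \<Longrightarrow> b (Suc s) = b s * f s"
  shows "b t1 = b t0 * (\<Prod>s\<in>{t0..<t1}. f s)"
  using assms(1)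
proof (induction rule: dec_induct)
  case base
  then show ?case by simp
next
  case (step n)
  then show ?case using assms(2)[of n] by (simp add: prod.atLeastLessThan_Suc mult.assoc)
qed

lemma exp_sum_le_prod_one_plus:
  fixes x :: "'a \<Rightarrow> real"
  assumes "finite S" and "\<And>s. s \<in> S \<Longrightarrow> \<bar>x s\<bar> \<le> 1/2"
  shows "exp (\<Sum>s\<in>S. x s - 2 * (x s)\<^sup>2) \<le> (\<Prod>s\<in>S. 1 + x s)"
proof -
  have "exp (x s - 2 * (x s)\<^sup>2) \<le> 1 + x s" if "s \<in> S" for s
  proof -
    have "x s - 2 * (x s)\<^sup>2 \<le> ln (1 + x s)"
      using abs_ln_one_plus_x_minus_x_bound[OF assms(2)[OF that]] by linarith
    moreover have "0 < 1 + x s"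
      using assms(2)[OF that] by linarith
    ultimately show ?thesis
      by (metis exp_le_cancel_iff exp_ln)
  qed
  then show ?thesis
    unfolding exp_sum[OF assms(1)] by (intro prod_mono) auto
qed

locale single_data_gd =
  fixes m :: nat and \<eta> y :: real and u v :: "real ^ 'd" and W0 :: "'d weights"
  assumes sign_y: "y = 1 \<or> y = -1" and orth_uv: "u \<bullet> v = 0" and m_pos: "0 < m"
begin

abbreviation W :: "nat \<Rightarrow> 'd weights" where
  "W \<equiv> traj m \<eta> y u v W0"

abbreviation gap :: "nat \<Rightarrow> real" where
  "gap t \<equiv> 1 - y * netf m (W t) (y *\<^sub>R u) (y *\<^sub>R v)"

definition \<kappa>u :: real where
  "\<kappa>u = 2 * \<eta> * (norm u)\<^sup>2 / real m"

definition \<kappa>v :: real where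
  "\<kappa>v = 2 * \<eta> * (norm v)\<^sup>2 / real m"

lemma W_Suc: "W (Suc t) = gd_step m \<eta> y u v (W t)"
  by (simp add: traj_def)

lemma inner_u_Suc:
  "W (Suc t) y r \<bullet> (y *\<^sub>R u) = W t y r \<bullet> (y *\<^sub>R u) + \<kappa>u * gap t * max (W t y r \<bullet> (y *\<^sub>R u)) 0"
  using gd_step_inner_u[OF sign_y orth_uv] by (simp add: W_Suc \<kappa>u_def)

lemma inner_v_Suc:
  "W (Suc t) y r \<bullet> (y *\<^sub>R v) = W t y r \<bullet> (y *\<^sub>R v) + \<kappa>v * gap t * max (W t y r \<bullet> (y *\<^sub>R v)) 0"
  using gd_step_inner_v[OF sign_y orth_uv] by (simp add: W_Suc \<kappa>v_def)

lemma mean_act_u_Suc: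
  assumes "0 \<le> 1 + \<kappa>u * gap t"
  shows "mean_act m (W (Suc t)) y (y *\<^sub>R u) = (1 + \<kappa>u * gap t)\<^sup>2 * mean_act m (W t) y (y *\<^sub>R u)"
proof -
  have "act (W (Suc t) y r \<bullet> (y *\<^sub>R u)) = (1 + \<kappa>u * gap t)\<^sup>2 * act (W t y r \<bullet> (y *\<^sub>R u))" for r
    unfolding inner_u_Suc by (rule act_relu_update[OF assms])
  then show ?thesis
    unfolding mean_act_def by (simp only: sum_distrib_left mult.left_commute)
qed

lemma gap_eq:
  "gap t = 1 - mean_act m (W t) y (y *\<^sub>R u) - mean_act m (W t) y (y *\<^sub>R v)
             + netF m (W t) (-y) (y *\<^sub>R u) (y *\<^sub>R v)"
  using y_netf_eq[OF sign_y, of m "W t"] netF_eq_mean_act[of m "W t" y] by simp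

end

text \<open>
  Only the hypotheses the argument needs: stability of the neuron sets of \<open>F\<^sub>y\<close>, the bound (2) at \<open>t\<^sub>0\<close>
  alone, and \<open>\<bar>1 - y f\<bar> \<le> 2\<close> from (5).
\<close>

locale oscillation_phase = single_data_gd +
  fixes \<delta> B :: real and t0 t1 :: nat
  assumes u_nonzero: "u \<noteq> 0"
    and eta_lower: "real m / (4 * (norm u)\<^sup>2) \<le> \<eta>" and eta_upper: "\<eta> \<le> 2 * real m / (5 * (norm u)\<^sup>2)"
    and v_small: "norm v < 0.01 * norm u"
    and delta_bounds: "0.2 < \<delta>" "\<delta> < 0.8"
    and oscillation: "\<And>t. \<delta> \<le> \<bar>gap t\<bar>"
    and init_energy_nonzero: "(\<Sum>r<m. act (W t0 y r \<bullet> (y *\<^sub>R u))) \<noteq> 0"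
    and t0_le_t1: "t0 \<le> t1"
    and B_pos: "0 < B"
    and stable_u: "\<And>t. t \<in> {t0..t1} \<Longrightarrow> posset m (W t) y u = posset m (W t0) y u"
    and stable_v: "\<And>t. t \<in> {t0..t1} \<Longrightarrow> posset m (W t) y v = posset m (W t0) y v"
    and init_max_u: "Max ((\<lambda>r. W t0 y r \<bullet> (y *\<^sub>R u)) ` {..<m}) < B * sqrt (beta_star m (W t0) y u * real m)"
    and opp_lower: "\<And>t. t \<in> {t0..t1} \<Longrightarrow> Min ((\<lambda>r. W t (-y) r \<bullet> ((-y) *\<^sub>R u)) ` {..<m}) > -0.1
                                          \<and> Min ((\<lambda>r. W t (-y) r \<bullet> ((-y) *\<^sub>R v)) ` {..<m}) > -0.1"
    and mean_act_v_less: "\<And>t. t \<in> {t0..t1} \<Longrightarrow> mean_act m (W t) y (y *\<^sub>R v) < \<delta>"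
    and gap_bounded: "\<And>t. t \<in> {t0..<t1} \<Longrightarrow> \<bar>gap t\<bar> \<le> 2"
begin

definition c :: real where
  "c = sqrt (1.05 - \<delta>)"

lemma c_bounds: "0 < c" "c < 0.93"
proof -
  show "0 < c"
    unfolding c_def using delta_bounds by simp
  have "sqrt (1.05 - \<delta>) < sqrt (0.93\<^sup>2)"
    using delta_bounds by (intro real_sqrt_less_mono) (simp add: power2_eq_square)
  then show "c < 0.93"
    unfolding c_def by simp
qed

lemma \<kappa>u_bounds: "1/2 \<le> \<kappa>u" "\<kappa>u \<le> 4/5"
proof -
  have "0 < (norm u)\<^sup>2" "0 < real m"
    using u_nonzero m_pos by simp_all
  then show "1/2 \<le> \<kappa>u" "\<kappa>u \<le> 4/5"
    using eta_lower eta_upper unfolding \<kappa>u_def by (simp_all add: field_simps)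
qed

lemma \<kappa>v_eq: "\<kappa>v = \<kappa>u * ((norm v)\<^sup>2 / (norm u)\<^sup>2)"
  unfolding \<kappa>u_def \<kappa>v_def using u_nonzero by (simp add: field_simps)

lemma \<kappa>v_bounds: "0 \<le> \<kappa>v" "\<kappa>v \<le> 1/12500"
proof -
  have "(norm v)\<^sup>2 \<le> (0.01 * norm u)\<^sup>2"
    using v_small by (intro power_mono) auto
  then have "(norm v)\<^sup>2 \<le> (norm u)\<^sup>2 / 10000"
    by (simp add: power2_eq_square)
  then have "(norm v)\<^sup>2 / (norm u)\<^sup>2 \<le> 1/10000"
    using u_nonzero by (simp add: divide_le_eq)
  then have "\<kappa>u * ((norm v)\<^sup>2 / (norm u)\<^sup>2) \<le> 4/5 * (1/10000)"
    using \<kappa>u_bounds by (intro mult_mono) auto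
  then show "\<kappa>v \<le> 1/12500"
    unfolding \<kappa>v_eq by simp
  show "0 \<le> \<kappa>v"
    unfolding \<kappa>v_eq using \<kappa>u_bounds by simp
qed

lemma stays_active:
  assumes "a \<in> {u, v}" "t \<in> {t0..t1}" "r < m" "0 < W t0 y r \<bullet> (y *\<^sub>R a)"
  shows "0 < W t y r \<bullet> (y *\<^sub>R a)"
  using assms stable_u stable_v unfolding posset_def by blast

lemma opp_netF_small:
  assumes "t \<in> {t0..t1}"
  shows "netF m (W t) (-y) (y *\<^sub>R u) (y *\<^sub>R v) \<le> 0.02"
proof -
  have "W t (-y) r \<bullet> (y *\<^sub>R u) < 0.1 \<and> W t (-y) r \<bullet> (y *\<^sub>R v) < 0.1" if "r < m" for r
  proof -
    have "Min ((\<lambda>r. W t (-y) r \<bullet> ((-y) *\<^sub>R u)) ` {..<m}) \<le> W t (-y) r \<bullet> ((-y) *\<^sub>R u)"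
         "Min ((\<lambda>r. W t (-y) r \<bullet> ((-y) *\<^sub>R v)) ` {..<m}) \<le> W t (-y) r \<bullet> ((-y) *\<^sub>R v)"
      using that by (auto intro: Min_le)
    then show ?thesis
      using opp_lower[OF assms] by auto
  qed
  then have "netF m (W t) (-y) (y *\<^sub>R u) (y *\<^sub>R v) \<le> 2 * 0.1\<^sup>2"
    by (intro netF_le_of_inner_less) auto
  then show ?thesis
    by (simp add: power2_eq_square)
qed

abbreviation potential :: "nat \<Rightarrow> real" where
  "potential t \<equiv> sqrt (mean_act m (W t) y (y *\<^sub>R u))"

lemma gap_regimes:
  assumes "t \<in> {t0..t1}"
  shows "\<delta> \<le> gap t \<and> potential t \<le> c \<or> gap t \<le> -\<delta> \<and> 1 \<le> potential t"
proof (cases "0 \<le> gap t")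
  case True
  then have "\<delta> \<le> gap t"
    using oscillation[of t] by simp
  then have "mean_act m (W t) y (y *\<^sub>R u) \<le> 1.05 - \<delta>"
    using gap_eq[of t] opp_netF_small[OF assms] mean_act_nonneg[of m "W t" y "y *\<^sub>R v"] by simp
  then have "potential t \<le> c"
    unfolding c_def by (rule real_sqrt_le_mono)
  with \<open>\<delta> \<le> gap t\<close> show ?thesis by simp
next
  case False
  then have "gap t \<le> -\<delta>"
    using oscillation[of t] by simp
  then have "1 \<le> mean_act m (W t) y (y *\<^sub>R u)"
    using gap_eq[of t] mean_act_v_less[OF assms] netF_nonneg[of m "W t" "-y" "y *\<^sub>R u" "y *\<^sub>R v"] by linarith
  with \<open>gap t \<le> -\<delta>\<close> show ?thesis by simp
qed

lemma active_u_neuron: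
  obtains r0 where "r0 < m" "0 < W t0 y r0 \<bullet> (y *\<^sub>R u)"
proof -
  have "\<exists>r\<in>{..<m}. act (W t0 y r \<bullet> (y *\<^sub>R u)) \<noteq> 0"
    using init_energy_nonzero by (meson sum.neutral)
  then obtain r0 where "r0 < m" "act (W t0 y r0 \<bullet> (y *\<^sub>R u)) \<noteq> 0"
    by auto
  then show ?thesis
    using that by (simp add: act_eq_0_iff)
qed

lemma growth_factor_pos:
  assumes "t \<in> {t0..<t1}"
  shows "0 < 1 + \<kappa>u * gap t"
proof -
  obtain r0 where r0: "r0 < m" "0 < W t0 y r0 \<bullet> (y *\<^sub>R u)"
    by (rule active_u_neuron)
  have "0 < W t y r0 \<bullet> (y *\<^sub>R u)" "0 < W (Suc t) y r0 \<bullet> (y *\<^sub>R u)"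
    using assms r0 stays_active[of u] by auto
  moreover have "W (Suc t) y r0 \<bullet> (y *\<^sub>R u) = W t y r0 \<bullet> (y *\<^sub>R u) * (1 + \<kappa>u * gap t)"
    unfolding inner_u_Suc using calculation(1) by (simp add: algebra_simps)
  ultimately show ?thesis
    by (metis zero_less_mult_pos)
qed

lemma potential_Suc:
  assumes "t \<in> {t0..<t1}"
  shows "potential (Suc t) = (1 + \<kappa>u * gap t) * potential t"
  using growth_factor_pos[OF assms]
  by (simp add: mean_act_u_Suc real_sqrt_mult)

lemma init_potential_less: "potential t0 < B"
proof -
  define M where "M = Max ((\<lambda>r. W t0 y r \<bullet> (y *\<^sub>R u)) ` {..<m})"
  obtain r0 where r0: "r0 < m" "0 < W t0 y r0 \<bullet> (y *\<^sub>R u)"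
    by (rule active_u_neuron)
  have "W t0 y r0 \<bullet> (y *\<^sub>R u) \<le> M"
    unfolding M_def using r0 by (intro Max_ge) auto
  with r0 have M_pos: "0 < M"
    by linarith
  have "act M = Max ((\<lambda>r. act (W t0 y r \<bullet> (y *\<^sub>R u))) ` {..<m})"
    unfolding M_def using r0 by (subst mono_Max_commute[OF mono_act]) (auto simp: image_comp)
  moreover have sum_eq: "(\<Sum>r<m. act (W t0 y r \<bullet> (y *\<^sub>R u))) = real m * mean_act m (W t0) y (y *\<^sub>R u)"
    unfolding mean_act_def using m_pos by simp
  ultimately have "beta_star m (W t0) y u * real m = M\<^sup>2 / mean_act m (W t0) y (y *\<^sub>R u)"
    unfolding beta_star_def using M_pos m_pos act_of_nonneg[of M] by simp
  moreover have mean_pos: "0 < mean_act m (W t0) y (y *\<^sub>R u)"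
    using init_energy_nonzero mean_act_nonneg[of m "W t0" y "y *\<^sub>R u"] sum_eq by force
  ultimately have "sqrt (beta_star m (W t0) y u * real m) = M / potential t0"
    using M_pos by (simp add: real_sqrt_divide)
  then have "M < B * (M / potential t0)"
    using init_max_u unfolding M_def by simp
  then show ?thesis
    using M_pos mean_pos by (simp add: field_simps)
qed

lemma gap_sum_lower: "\<delta> * (1 - c) / 2 * real (t1 - t0) - B / (\<kappa>u * c) \<le> (\<Sum>s\<in>{t0..<t1}. gap s)"
proof -
  have \<kappa>u_pos: "0 < \<kappa>u"
    using \<kappa>u_bounds by simp
  have potential_nonneg: "0 \<le> potential t1"
    by (simp add: mean_act_nonneg)
  have "\<kappa>u * \<delta> * (1 - c) / 2 * real (t1 - t0) + (3 - c) / 2 * (potential t1 - potential t0)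
      \<le> \<kappa>u * (\<Sum>s\<in>{t0..<t1}. gap s)"
    using \<kappa>u_pos delta_bounds c_bounds t0_le_t1 potential_Suc gap_regimes
    by (intro oscillation_sum_gain) auto
  moreover have "(3 - c) / 2 * - B \<le> (3 - c) / 2 * (potential t1 - potential t0)"
    by (rule mult_left_mono) (use potential_nonneg init_potential_less in linarith, use c_bounds in simp)
  moreover have "(3 - c) / 2 * B \<le> B / c"
  proof -
    have "0 \<le> (1 - c) * (2 - c)"
      using c_bounds by (intro mult_nonneg_nonneg) auto
    then have "(3 - c) * c \<le> 2"
      by (simp add: algebra_simps)
    then have "(3 - c) / 2 \<le> 1 / c"
      using c_bounds by (simp add: field_simps)
    then have "(3 - c) / 2 * B \<le> 1 / c * B"
      using B_pos by (intro mult_right_mono) auto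
    then show ?thesis
      by simp
  qed
  ultimately have "\<kappa>u * (\<delta> * (1 - c) / 2 * real (t1 - t0) - B / (\<kappa>u * c)) \<le> \<kappa>u * (\<Sum>s\<in>{t0..<t1}. gap s)"
    using \<kappa>u_pos by (simp add: field_simps)
  then show ?thesis
    using \<kappa>u_pos by simp
qed

lemma gap_sum_bound:
  "2 * ((\<delta> - \<delta> * sqrt (1.05 - \<delta>)) / 4) * real (t1 - t0)
     - real m * B / (\<eta> * (norm u)\<^sup>2 * sqrt (1.05 - \<delta>))
   \<le> (\<Sum>s\<in>{t0..<t1}. gap s)"
proof -
  have "real m * B / (\<eta> * (norm u)\<^sup>2 * sqrt (1.05 - \<delta>)) = 2 * (B / (\<kappa>u * c))"
    unfolding \<kappa>u_def c_def using m_pos by (simp add: field_simps)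
  moreover have "0 \<le> B / (\<kappa>u * c)"
    using B_pos \<kappa>u_bounds c_bounds by simp
  moreover have "2 * ((\<delta> - \<delta> * sqrt (1.05 - \<delta>)) / 4) * real (t1 - t0) = \<delta> * (1 - c) / 2 * real (t1 - t0)"
    unfolding c_def by (simp add: field_simps)
  ultimately show ?thesis
    using gap_sum_lower by linarith
qed

lemma \<kappa>v_square_le: "8 * \<kappa>v\<^sup>2 \<le> \<kappa>v * (\<delta> * (1 - c) * 3 / 8)"
proof -
  have "0.2 * 0.07 \<le> \<delta> * (1 - c)"
    using delta_bounds c_bounds by (intro mult_mono) auto
  then have "8 * \<kappa>v \<le> \<delta> * (1 - c) * 3 / 8"
    using \<kappa>v_bounds by simp
  then have "\<kappa>v * (8 * \<kappa>v) \<le> \<kappa>v * (\<delta> * (1 - c) * 3 / 8)"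
    using \<kappa>v_bounds by (intro mult_left_mono) auto
  then show ?thesis
    by (simp add: power2_eq_square)
qed

lemma v_growth_exponent_bound:
  "\<eta> * (norm v)\<^sup>2 * ((\<delta> - \<delta> * sqrt (1.05 - \<delta>)) / 4) / real m * real (t1 - t0)
     - (norm v)\<^sup>2 / (norm u)\<^sup>2 * (B / sqrt (1.05 - \<delta>))
   \<le> (\<Sum>s\<in>{t0..<t1}. \<kappa>v * gap s - 2 * (\<kappa>v * gap s)\<^sup>2)"
proof -
  define T where "T = real (t1 - t0)"
  have "(\<Sum>s\<in>{t0..<t1}. \<kappa>v * gap s - 8 * \<kappa>v\<^sup>2) \<le> (\<Sum>s\<in>{t0..<t1}. \<kappa>v * gap s - 2 * (\<kappa>v * gap s)\<^sup>2)"
  proof (rule sum_mono)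
    fix s assume "s \<in> {t0..<t1}"
    then have "\<bar>gap s\<bar>\<^sup>2 \<le> 2\<^sup>2"
      using gap_bounded by (intro power_mono) auto
    then have "\<kappa>v\<^sup>2 * (gap s)\<^sup>2 \<le> \<kappa>v\<^sup>2 * 4"
      by (intro mult_left_mono) auto
    then show "\<kappa>v * gap s - 8 * \<kappa>v\<^sup>2 \<le> \<kappa>v * gap s - 2 * (\<kappa>v * gap s)\<^sup>2"
      unfolding power_mult_distrib by linarith
  qed
  moreover have "(\<Sum>s\<in>{t0..<t1}. \<kappa>v * gap s - 8 * \<kappa>v\<^sup>2)
      = \<kappa>v * (\<Sum>s\<in>{t0..<t1}. gap s) - T * (8 * \<kappa>v\<^sup>2)"
    unfolding T_def by (simp only: sum_subtractf[of "\<lambda>s. \<kappa>v * gap s"] sum_distrib_left sum_constant card_atLeastLessThan)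
  moreover have "\<kappa>v * (\<delta> * (1 - c) / 2 * T - B / (\<kappa>u * c)) \<le> \<kappa>v * (\<Sum>s\<in>{t0..<t1}. gap s)"
    using gap_sum_lower \<kappa>v_bounds unfolding T_def by (intro mult_left_mono) auto
  moreover have "T * (8 * \<kappa>v\<^sup>2) \<le> T * (\<kappa>v * (\<delta> * (1 - c) * 3 / 8))"
    using \<kappa>v_square_le unfolding T_def by (intro mult_left_mono) auto
  moreover have "\<eta> * (norm v)\<^sup>2 * ((\<delta> - \<delta> * c) / 4) / real m * T = \<kappa>v * (\<delta> * (1 - c) / 8 * T)"
    unfolding \<kappa>v_def using m_pos by (simp add: field_simps)
  moreover have "(norm v)\<^sup>2 / (norm u)\<^sup>2 * (B / c) = \<kappa>v * (B / (\<kappa>u * c))"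
    unfolding \<kappa>v_eq using \<kappa>u_bounds by (simp add: field_simps)
  moreover have "\<kappa>v * (\<delta> * (1 - c) / 2 * T - B / (\<kappa>u * c))
      = \<kappa>v * (\<delta> * (1 - c) / 8 * T) - \<kappa>v * (B / (\<kappa>u * c)) + T * (\<kappa>v * (\<delta> * (1 - c) * 3 / 8))"
    by (simp add: field_simps)
  ultimately show ?thesis
    unfolding c_def[symmetric] T_def[symmetric] by linarith
qed

lemma v_neuron_growth:
  assumes "r < m" and "0 < W t0 y r \<bullet> (y *\<^sub>R v)"
  shows "W t0 y r \<bullet> (y *\<^sub>R v) *
           exp (\<eta> * (norm v)\<^sup>2 * ((\<delta> - \<delta> * sqrt (1.05 - \<delta>)) / 4) / real m * real (t1 - t0)
                - (norm v)\<^sup>2 / (norm u)\<^sup>2 * (B / sqrt (1.05 - \<delta>)))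
         \<le> W t1 y r \<bullet> (y *\<^sub>R v)"
proof -
  define b where "b t = W t y r \<bullet> (y *\<^sub>R v)" for t
  have "b (Suc s) = b s * (1 + \<kappa>v * gap s)" if "s \<in> {t0..<t1}" for s
  proof -
    have "0 < b s"
      using that assms stays_active[of v s r] unfolding b_def by auto
    then show ?thesis
      unfolding b_def inner_v_Suc by (simp add: algebra_simps)
  qed
  then have b_t1: "b t1 = b t0 * (\<Prod>s\<in>{t0..<t1}. 1 + \<kappa>v * gap s)"
    by (rule prod_of_mult_recurrence[OF t0_le_t1])
  have "exp (\<Sum>s\<in>{t0..<t1}. \<kappa>v * gap s - 2 * (\<kappa>v * gap s)\<^sup>2) \<le> (\<Prod>s\<in>{t0..<t1}. 1 + \<kappa>v * gap s)"
  proof (rule exp_sum_le_prod_one_plus)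
    fix s assume "s \<in> {t0..<t1}"
    then have "\<kappa>v * \<bar>gap s\<bar> \<le> 1/12500 * 2"
      using \<kappa>v_bounds gap_bounded by (intro mult_mono) auto
    then show "\<bar>\<kappa>v * gap s\<bar> \<le> 1/2"
      using \<kappa>v_bounds by (simp add: abs_mult)
  qed simp
  moreover have "0 \<le> b t0"
    using assms(2) unfolding b_def by simp
  ultimately have "b t0 * exp (\<Sum>s\<in>{t0..<t1}. \<kappa>v * gap s - 2 * (\<kappa>v * gap s)\<^sup>2) \<le> b t1"
    unfolding b_t1 by (rule mult_left_mono)
  moreover have "b t0 * exp (\<eta> * (norm v)\<^sup>2 * ((\<delta> - \<delta> * sqrt (1.05 - \<delta>)) / 4) / real m * real (t1 - t0)
                - (norm v)\<^sup>2 / (norm u)\<^sup>2 * (B / sqrt (1.05 - \<delta>)))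
      \<le> b t0 * exp (\<Sum>s\<in>{t0..<t1}. \<kappa>v * gap s - 2 * (\<kappa>v * gap s)\<^sup>2)"
    using v_growth_exponent_bound \<open>0 \<le> b t0\<close> by (intro mult_left_mono) auto
  ultimately show ?thesis
    unfolding b_def by linarith
qed

end

theorem mainTheorem10:
  fixes u v :: "real ^ 'd" and y \<eta> \<delta> B :: real and m t0 t1 :: nat and W0 :: "'d weights"
  defines "W \<equiv> traj m \<eta> y u v W0"
  defines "\<epsilon> \<equiv> (\<delta> - \<delta> * sqrt (1.05 - \<delta>)) / 4"
  assumes y: "y = 1 \<or> y = -1"
    and uv: "u \<noteq> 0" "v \<noteq> 0" "u \<bullet> v = 0"
    and m: "m > 0"
    and eta: "real m / (4 * (norm u)\<^sup>2) \<le> \<eta>" "\<eta> \<le> 2 * real m / (5 * (norm u)\<^sup>2)"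
    and vsmall: "norm v < 0.01 * norm u"
    and delta: "0.2 < \<delta>" "\<delta> < 0.8"
    and osc: "\<forall>t. \<bar>y * netf m (W t) (y *\<^sub>R u) (y *\<^sub>R v) - 1\<bar> \<ge> \<delta>"
    and beta_wd: "(\<Sum>r<m. act (W t0 y r \<bullet> (y *\<^sub>R u))) \<noteq> 0"
    and t01: "t0 \<le> t1"
    and B: "B > 0"
    and c1: "\<forall>t\<in>{t0..t1}. \<forall>j\<in>{y, -y}.
               posset m (W t) j u = posset m (W t0) j u \<and> negset m (W t) j u = negset m (W t0) j u \<and>
               posset m (W t) j v = posset m (W t0) j v \<and> negset m (W t) j v = negset m (W t0) j v"
    and c2: "\<forall>t\<in>{t0..t1}. Max ((\<lambda>r. W t y r \<bullet> (y *\<^sub>R u)) ` {..<m})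
                 < B * sqrt (beta_star m (W t0) y u * real m)"
    and c3: "\<forall>t\<in>{t0..t1}. Min ((\<lambda>r. W t (-y) r \<bullet> ((-y) *\<^sub>R u)) ` {..<m}) > -0.1
                 \<and> Min ((\<lambda>r. W t (-y) r \<bullet> ((-y) *\<^sub>R v)) ` {..<m}) > -0.1"
    and c4: "\<forall>t\<in>{t0..t1}. (1 / real m) * (\<Sum>r<m. act (W t y r \<bullet> (y *\<^sub>R v))) < \<delta>"
    and c5: "\<forall>t\<in>{t0..t1}. -2 \<le> 1 - y * netf m (W t) (y *\<^sub>R u) (y *\<^sub>R v)
                 \<and> 1 - y * netf m (W t) (y *\<^sub>R u) (y *\<^sub>R v) \<le> 1"
  shows "(\<Sum>s\<in>{t0..<t1}. 1 - y * netf m (W s) (y *\<^sub>R u) (y *\<^sub>R v))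
            \<ge> 2 * \<epsilon> * real (t1 - t0) - real m * B / (\<eta> * (norm u)\<^sup>2 * sqrt (1.05 - \<delta>))
         \<and> (\<forall>r<m. W t0 y r \<bullet> (y *\<^sub>R v) > 0 \<longrightarrow>
               W t1 y r \<bullet> (y *\<^sub>R v) \<ge> W t0 y r \<bullet> (y *\<^sub>R v) *
                 exp (\<eta> * (norm v)\<^sup>2 * \<epsilon> / real m * real (t1 - t0)
                      - (norm v)\<^sup>2 / (norm u)\<^sup>2 * (B / sqrt (1.05 - \<delta>))))"
proof -
  interpret oscillation_phase m \<eta> y u v W0 \<delta> B t0 t1
  proof unfold_locales
    fix t assume t: "t \<in> {t0..t1}"
    show "posset m (traj m \<eta> y u v W0 t) y u = posset m (traj m \<eta> y u v W0 t0) y u"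
         "posset m (traj m \<eta> y u v W0 t) y v = posset m (traj m \<eta> y u v W0 t0) y v"
      using c1[rule_format, OF t, of y] unfolding W_def by simp_all
  next
    fix t assume "t \<in> {t0..<t1}"
    then have t: "t \<in> {t0..t1}"
      by simp
    show "\<bar>1 - y * netf m (traj m \<eta> y u v W0 t) (y *\<^sub>R u) (y *\<^sub>R v)\<bar> \<le> 2"
      using c5[rule_format, OF t] unfolding W_def by (simp add: abs_le_iff)
  next
    fix t
    show "\<delta> \<le> \<bar>1 - y * netf m (traj m \<eta> y u v W0 t) (y *\<^sub>R u) (y *\<^sub>R v)\<bar>"
      using osc unfolding W_def by (simp add: abs_minus_commute)
  qed (use y uv m eta vsmall delta beta_wd t01 B c2 c3 c4 in \<open>simp_all add: W_def mean_act_def\<close>)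
  show ?thesis
    unfolding W_def \<epsilon>_def using gap_sum_bound v_neuron_growth by auto
qed

end
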